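(* BC, MS and FT satisfy partition consistency. VD and MF do not: for each $f\in\{\mathrm{VD},\mathrm{MF}\}$ there exists a profile $P$ for which the equivalence in the definition of partition consistency fails.
   Context: Candidates come from a fixed infinite universe; rules are defined for profiles over every finite candidate set $C$. An approval ballot is a nonempty subset $A\subseteq C$; a profile over $C$ is a finite sequence of ballots. An axis is a strict linear order $\triangleleft$ on $C$; $a\trianglelefteq b$ means $a\triangleleft b$ or $a=b$. A ballot $A$ is an interval of $\triangleleft$ if for all $a,b\in A$ and every $c$ with $a\triangleleft c\triangleleft b$ we have $c\in A$; a set $S\subseteq C$ is an interval of $\triangleleft$ in the same sense. For $C'\subseteq C$, $P_{C'}$ is the profile over $C'$ obtained by intersecting each ballot with $C'$ (ballots becoming empty are discarded), and $\triangleleft_{C'}$ is the restriction of $\triangleleft$ to $C'$. The co-approval partition $C_1,\dots,C_k$ of $P$ is the set of equivalence classes of the equivalence relation on $C$ generated by $x\sim y$ whenever some ballot of $P$ contains both $x$ and $y$ (never-approved candidates form singleton classes). A rule $f$ satisfies partition consistency if for every profile $P$ with co-approval partition $C_1,\dots,C_k$ and every axis $\triangleleft$ on $C$: $\triangleleft\in f(P)$ iff for every $j$, $C_j$ is an interval of $\triangleleft$ and $\triangleleft_{C_j}\in f(P_{C_j})$. For a cost function $\mathrm{cost}_f$, the scoring rule returns $f(P)=\arg\min_{\triangleleft}\sum_{A\in P}\mathrm{cost}_f(A,\triangleleft)$. The five rules are the scoring rules (on every $C$) with costs: $\mathrm{cost}_{\mathrm{VD}}(A,\triangleleft)=0$ if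 $A$ is an interval of $\triangleleft$ and $1$ otherwise; $\mathrm{cost}_{\mathrm{MF}}(A,\triangleleft)=\min_{x,y\in A,\ x\trianglelefteq y}\big(|\{z\in A: z\triangleleft x \text{ or } y\triangleleft z\}|+|\{z\notin A: x\triangleleft z\triangleleft y\}|\big)$; $\mathrm{cost}_{\mathrm{BC}}(A,\triangleleft)=|\{b\notin A: a\triangleleft b\triangleleft c \text{ for some } a,c\in A\}|$; $\mathrm{cost}_{\mathrm{MS}}(A,\triangleleft)=\sum_{x\in C\setminus A}\min\big(|\{y\in A:y\triangleleft x\}|,\,|\{y\in A:x\triangleleft y\}|\big)$; $\mathrm{cost}_{\mathrm{FT}}(A,\triangleleft)=\sum_{x\in C\setminus A}|\{y\in A:y\triangleleft x\}|\cdot|\{y\in A:x\triangleleft y\}|$. *)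

theory Defs
  imports Main
begin

text \<open>Candidates are elements of a type 'a (the universe); an axis on a finite
candidate set C is a strict linear order on C, represented as a relation
r \<subseteq> C \<times> C; (a,b) \<in> r means a \<triangleleft> b.\<close>

definition is_axis :: "'a set \<Rightarrow> 'a rel \<Rightarrow> bool" where
  "is_axis C r \<longleftrightarrow> strict_linear_order_on C r \<and> r \<subseteq> C \<times> C"

definition is_profile :: "'a set \<Rightarrow> 'a set list \<Rightarrow> bool" where
  "is_profile C P \<longleftrightarrow> (\<forall>A\<in>set P. A \<noteq> {} \<and> A \<subseteq> C)"

definition is_interval :: "'a rel \<Rightarrow> 'a set \<Rightarrow> bool" where
  "is_interval r S \<longleftrightarrow> (\<forall>a\<in>S. \<forall>b\<in>S. \<forall>c. (a,c) \<in> r \<and> (c,b) \<in> r \<longrightarrow> c \<in> S)"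

definition restrict_axis :: "'a rel \<Rightarrow> 'a set \<Rightarrow> 'a rel" where
  "restrict_axis r D = r \<inter> (D \<times> D)"

definition restrict_profile :: "'a set \<Rightarrow> 'a set list \<Rightarrow> 'a set list" where
  "restrict_profile D P = filter (\<lambda>A. A \<noteq> {}) (map (\<lambda>A. A \<inter> D) P)"

definition coapp_rel :: "'a set \<Rightarrow> 'a set list \<Rightarrow> 'a rel" where
  "coapp_rel C P = {(x,y). x \<in> C \<and> y \<in> C \<and> (x = y \<or> (\<exists>A\<in>set P. x \<in> A \<and> y \<in> A))}"

definition coapp_partition :: "'a set \<Rightarrow> 'a set list \<Rightarrow> 'a set set" where
  "coapp_partition C P = C // trancl (coapp_rel C P)"

type_synonym 'a rule = "'a set \<Rightarrow> 'a set list \<Rightarrow> 'a rel set"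

definition partition_consistent :: "'a rule \<Rightarrow> bool" where
  "partition_consistent f \<longleftrightarrow>
     (\<forall>C P r. finite C \<longrightarrow> is_profile C P \<longrightarrow> is_axis C r \<longrightarrow>
        (r \<in> f C P \<longleftrightarrow>
          (\<forall>D \<in> coapp_partition C P. is_interval r D \<and>
              restrict_axis r D \<in> f D (restrict_profile D P))))"

type_synonym 'a costfun = "'a set \<Rightarrow> 'a set \<Rightarrow> 'a rel \<Rightarrow> nat"

definition scoring_rule :: "'a costfun \<Rightarrow> 'a rule" where
  "scoring_rule cost C P =
     {r. is_axis C r \<and> (\<forall>r'. is_axis C r' \<longrightarrow>
          (\<Sum>A\<leftarrow>P. cost C A r) \<le> (\<Sum>A\<leftarrow>P. cost C A r'))}"

definition cost_VD :: "'a costfun" where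
  "cost_VD C A r = (if is_interval r A then 0 else 1)"

definition cost_MF :: "'a costfun" where
  "cost_MF C A r = Min ((\<lambda>(x,y). card {z \<in> A. (z,x) \<in> r \<or> (y,z) \<in> r}
                                 + card {z \<in> C - A. (x,z) \<in> r \<and> (z,y) \<in> r})
                        ` {(x,y). x \<in> A \<and> y \<in> A \<and> (x = y \<or> (x,y) \<in> r)})"

definition cost_BC :: "'a costfun" where
  "cost_BC C A r = card {b \<in> C - A. \<exists>a\<in>A. \<exists>c\<in>A. (a,b) \<in> r \<and> (b,c) \<in> r}"

definition cost_MS :: "'a costfun" where
  "cost_MS C A r = (\<Sum>x\<in>C - A. min (card {y\<in>A. (y,x) \<in> r}) (card {y\<in>A. (x,y) \<in> r}))"

definition cost_FT :: "'a costfun" where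
  "cost_FT C A r = (\<Sum>x\<in>C - A. card {y\<in>A. (y,x) \<in> r} * card {y\<in>A. (x,y) \<in> r})"

definition VD :: "'a rule" where "VD = scoring_rule cost_VD"
definition MF :: "'a rule" where "MF = scoring_rule cost_MF"
definition BC :: "'a rule" where "BC = scoring_rule cost_BC"
definition MS :: "'a rule" where "MS = scoring_rule cost_MS"
definition FT :: "'a rule" where "FT = scoring_rule cost_FT"

end

theory Submission
  imports Defs
begin

text \<open>
  The costs of BC, MS and FT have the form: every unapproved candidate x pays h l m, where l and
  m count the approved candidates on either side of x and h l m = 0 iff l = 0 or m = 0. A ballot
  lies inside one co-approval class D, and its cost splits into its cost on D under the restricted
  axis plus a penalty paid by the candidates outside D; the total penalty vanishes iff every class
  is an interval. As optimal axes of the classes can always be glued into one axis on which all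
  classes are intervals, the optimal axes are exactly the glued ones.

  VD and MF both charge a two-candidate ballot 0 if it is an interval and 1 otherwise. For the
  ballots {a,b}, {a,c}, {a,d} over {a,b,c,d,e} at most two of them are intervals, and the axis
  b a c e d has cost 1, hence is optimal; but it places the never-approved e inside the class
  {a,b,c,d}.
\<close>

section \<open>Axes\<close>

lemma is_axisD:
  assumes "is_axis C r"
  shows "trans r" "irrefl r" "total_on C r" "r \<subseteq> C \<times> C"
  using assms unfolding is_axis_def strict_linear_order_on_def by auto

lemma is_axis_asym: "is_axis C r \<Longrightarrow> (x,y) \<in> r \<Longrightarrow> (y,x) \<notin> r"
  by (meson is_axisD(1,2) irrefl_onD transD UNIV_I)

lemma is_axis_restrict: "is_axis C r \<Longrightarrow> D \<subseteq> C \<Longrightarrow> is_axis D (restrict_axis r D)"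
  unfolding is_axis_def strict_linear_order_on_def restrict_axis_def trans_def irrefl_on_def
    total_on_def
  by blast

lemma quotient_class_eq:
  assumes "equiv A R" "X \<in> A // R" "x \<in> X"
  shows "X = R `` {x}"
proof -
  obtain y where "X = R `` {y}"
    using assms(2) by (rule quotientE)
  then show ?thesis
    using assms(3) equiv_class_eq[OF assms(1)] by simp
qed

definition glued_axis ::
    "'a set \<Rightarrow> ('a \<Rightarrow> 'a set) \<Rightarrow> ('a set \<Rightarrow> nat) \<Rightarrow> ('a set \<Rightarrow> 'a rel) \<Rightarrow> 'a rel" where
  "glued_axis C cl k s =
    {(x,y). x \<in> C \<and> y \<in> C \<and> (k (cl x) < k (cl y) \<or> cl x = cl y \<and> (x,y) \<in> s (cl x))}"

lemma is_axis_glued_axis: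
  assumes cl: "\<And>x. x \<in> C \<Longrightarrow> x \<in> cl x" "\<And>x. x \<in> C \<Longrightarrow> cl x \<in> \<Pi>"
    and k: "inj_on k \<Pi>" and s: "\<And>D. D \<in> \<Pi> \<Longrightarrow> is_axis D (s D)"
  shows "is_axis C (glued_axis C cl k s)"
  unfolding is_axis_def strict_linear_order_on_def
proof (intro conjI)
  have s_axis: "is_axis (cl x) (s (cl x))" if "x \<in> C" for x
    using s[OF cl(2)[OF that]] .
  show "glued_axis C cl k s \<subseteq> C \<times> C"
    unfolding glued_axis_def by auto
  show "irrefl (glued_axis C cl k s)"
    using is_axisD(2)[OF s_axis] unfolding glued_axis_def irrefl_on_def by auto
  show "trans (glued_axis C cl k s)"
  proof (rule transI)
    fix x y z assume "(x,y) \<in> glued_axis C cl k s" "(y,z) \<in> glued_axis C cl k s"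
    then have xyz: "x \<in> C" "y \<in> C" "z \<in> C"
      and xy: "k (cl x) < k (cl y) \<or> cl x = cl y \<and> (x,y) \<in> s (cl x)"
      and yz: "k (cl y) < k (cl z) \<or> cl y = cl z \<and> (y,z) \<in> s (cl y)"
      unfolding glued_axis_def by auto
    have "trans (s (cl x))"
      using is_axisD(1)[OF s_axis[OF xyz(1)]] .
    then have "k (cl x) < k (cl z) \<or> cl x = cl z \<and> (x,z) \<in> s (cl x)"
      using xy yz by (auto dest: transD)
    then show "(x,z) \<in> glued_axis C cl k s"
      unfolding glued_axis_def using xyz by blast
  qed
  show "total_on C (glued_axis C cl k s)"
  proof (rule total_onI)
    fix x y assume xy: "x \<in> C" "y \<in> C" "x \<noteq> y"
    show "(x,y) \<in> glued_axis C cl k s \<or> (y,x) \<in> glued_axis C cl k s"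
    proof (cases "cl x = cl y")
      case True
      then have "(x,y) \<in> s (cl x) \<or> (y,x) \<in> s (cl x)"
        using is_axisD(3)[OF s_axis[OF xy(1)]] cl(1) xy unfolding total_on_def by metis
      then show ?thesis
        unfolding glued_axis_def using xy True by auto
    next
      case False
      then have "k (cl x) \<noteq> k (cl y)"
        using inj_onD[OF k] cl(2) xy by blast
      then show ?thesis
        unfolding glued_axis_def using xy by auto
    qed
  qed
qed

lemma glued_axis_block:
  assumes cl: "\<And>x. x \<in> C \<Longrightarrow> x \<in> cl x" "\<And>x. x \<in> C \<Longrightarrow> cl x \<in> \<Pi>"
    and k: "inj_on k \<Pi>" and s: "is_axis D (s D)"
    and D: "D \<in> \<Pi>" "D \<subseteq> C" "\<And>x. x \<in> D \<Longrightarrow> cl x = D"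
  shows "is_interval (glued_axis C cl k s) D" "restrict_axis (glued_axis C cl k s) D = s D"
proof -
  show "is_interval (glued_axis C cl k s) D"
    unfolding is_interval_def
  proof (intro ballI allI impI)
    fix a b c assume ab: "a \<in> D" "b \<in> D"
      and c: "(a,c) \<in> glued_axis C cl k s \<and> (c,b) \<in> glued_axis C cl k s"
    then have "c \<in> C" "k (cl a) \<le> k (cl c)" "k (cl c) \<le> k (cl b)"
      unfolding glued_axis_def by auto
    then have "cl c = D"
      using inj_onD[OF k _ cl(2) D(1)] D(3) ab by fastforce
    then show "c \<in> D"
      using cl(1)[OF \<open>c \<in> C\<close>] by blast
  qed
  show "restrict_axis (glued_axis C cl k s) D = s D"
    using is_axisD(4)[OF s] D(2,3) unfolding restrict_axis_def glued_axis_def by auto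
qed

lemma glue_axes:
  assumes C: "finite C" and R: "equiv C R"
    and s: "\<And>D. D \<in> C // R \<Longrightarrow> is_axis D (s D)"
  shows "\<exists>r. is_axis C r \<and> (\<forall>D \<in> C // R. is_interval r D \<and> restrict_axis r D = s D)"
proof -
  obtain k :: "'a set \<Rightarrow> nat" where k: "inj_on k (C // R)"
    using finite_imp_inj_to_nat_seg[OF finite_quotient[OF C equiv_type[OF R]]] by blast
  have cl_self: "x \<in> R `` {x}" if "x \<in> C" for x
    using equiv_class_self[OF R that] .
  have cl_in: "R `` {x} \<in> C // R" if "x \<in> C" for x
    using that by (rule quotientI)
  have block_sub: "D \<subseteq> C" if "D \<in> C // R" for D
    using in_quotient_imp_subset[OF R that] .
  have block_eq: "R `` {x} = D" if "D \<in> C // R" "x \<in> D" for D x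
    using quotient_class_eq[OF R that] by simp
  show ?thesis
  proof (intro exI conjI ballI)
    show "is_axis C (glued_axis C (\<lambda>x. R `` {x}) k s)"
      by (rule is_axis_glued_axis[where cl = "\<lambda>x. R `` {x}" and s = s, OF cl_self cl_in k s])
    fix D assume D: "D \<in> C // R"
    show "is_interval (glued_axis C (\<lambda>x. R `` {x}) k s) D"
      "restrict_axis (glued_axis C (\<lambda>x. R `` {x}) k s) D = s D"
      using glued_axis_block[where cl = "\<lambda>x. R `` {x}" and s = s,
          OF cl_self cl_in k s[OF D] D block_sub[OF D] block_eq[OF D]]
      by simp_all
  qed
qed

section \<open>Separable minimisation\<close>

lemma sum_list_by_blocks:
  fixes g :: "'a \<Rightarrow> 'b::comm_monoid_add"
  assumes "finite I" "\<forall>x\<in>set xs. \<exists>!i. i \<in> I \<and> Q i x"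
  shows "(\<Sum>x\<leftarrow>xs. g x) = (\<Sum>i\<in>I. \<Sum>x\<leftarrow>filter (Q i) xs. g x)"
  using assms(2)
proof (induction xs)
  case (Cons x xs)
  then obtain i0 where i0: "i0 \<in> I" "Q i0 x" and uniq: "\<And>i. i \<in> I \<Longrightarrow> Q i x \<Longrightarrow> i = i0"
    by auto
  have "(\<Sum>i\<in>I. \<Sum>y\<leftarrow>filter (Q i) (x # xs). g y)
      = (\<Sum>i\<in>I. (if i = i0 then g x else 0) + (\<Sum>y\<leftarrow>filter (Q i) xs. g y))"
  proof (rule sum.cong)
    fix i assume "i \<in> I"
    then have "Q i x \<longleftrightarrow> i = i0" using i0 uniq by blast
    then show "(\<Sum>y\<leftarrow>filter (Q i) (x # xs). g y)
      = (if i = i0 then g x else 0) + (\<Sum>y\<leftarrow>filter (Q i) xs. g y)" by simp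
  qed simp
  also have "\<dots> = g x + (\<Sum>i\<in>I. \<Sum>y\<leftarrow>filter (Q i) xs. g y)"
    using i0(1) assms(1) by (simp add: sum.distrib)
  finally show ?case using Cons by simp
qed simp

lemma separable_argmin:
  fixes total :: "'x \<Rightarrow> nat" and part :: "'i \<Rightarrow> 'y \<Rightarrow> nat"
  assumes I: "finite I"
    and res: "\<And>x i. x \<in> X \<Longrightarrow> i \<in> I \<Longrightarrow> res i x \<in> Y i"
    and split: "\<And>x. x \<in> X \<Longrightarrow> total x = (\<Sum>i\<in>I. part i (res i x)) + pen x"
    and pen: "\<And>x. x \<in> X \<Longrightarrow> pen x = 0 \<longleftrightarrow> ok x"
    and glue: "\<And>y. (\<And>i. i \<in> I \<Longrightarrow> y i \<in> Y i) \<Longrightarrow> \<exists>x\<in>X. ok x \<and> (\<forall>i\<in>I. res i x = y i)"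
    and x: "x \<in> X"
  shows "(\<forall>x'\<in>X. total x \<le> total x') \<longleftrightarrow>
           ok x \<and> (\<forall>i\<in>I. \<forall>y\<in>Y i. part i (res i x) \<le> part i y)"
proof
  assume opt: "\<forall>x'\<in>X. total x \<le> total x'"
  have "\<exists>y. \<forall>i\<in>I. y i \<in> Y i \<and> (\<forall>y'\<in>Y i. part i (y i) \<le> part i y')"
  proof (rule bchoice, rule ballI)
    fix i assume "i \<in> I"
    then show "\<exists>y. y \<in> Y i \<and> (\<forall>y'\<in>Y i. part i y \<le> part i y')"
      using ex_has_least_nat[of "\<lambda>y. y \<in> Y i" "res i x" "part i"] res[OF x] by blast
  qed
  then obtain y where y: "\<And>i. i \<in> I \<Longrightarrow> y i \<in> Y i"
    and y_min: "\<And>i y'. i \<in> I \<Longrightarrow> y' \<in> Y i \<Longrightarrow> part i (y i) \<le> part i y'"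
    by blast
  obtain x0 where x0: "x0 \<in> X" "ok x0" "\<forall>i\<in>I. res i x0 = y i"
    using glue[OF y] by blast
  have le: "\<And>i. i \<in> I \<Longrightarrow> part i (y i) \<le> part i (res i x)"
    using y_min res[OF x] by blast
  have "(\<Sum>i\<in>I. part i (res i x)) + pen x \<le> total x0"
    using split[OF x] opt x0(1) by simp
  also have "\<dots> = (\<Sum>i\<in>I. part i (y i))"
    using split[OF x0(1)] pen[OF x0(1)] x0(2,3) by simp
  finally have "(\<Sum>i\<in>I. part i (res i x)) + pen x \<le> (\<Sum>i\<in>I. part i (y i))" .
  then have "pen x = 0" and sums: "(\<Sum>i\<in>I. part i (y i)) = (\<Sum>i\<in>I. part i (res i x))"
    using sum_mono[of I "\<lambda>i. part i (y i)", OF le] by simp_all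
  then show "ok x \<and> (\<forall>i\<in>I. \<forall>y\<in>Y i. part i (res i x) \<le> part i y)"
    using pen[OF x] sum_mono_inv[OF sums le _ I] y_min by metis
next
  assume local_opt: "ok x \<and> (\<forall>i\<in>I. \<forall>y\<in>Y i. part i (res i x) \<le> part i y)"
  show "\<forall>x'\<in>X. total x \<le> total x'"
  proof
    fix x' assume x': "x' \<in> X"
    have "total x = (\<Sum>i\<in>I. part i (res i x))"
      using split[OF x] pen[OF x] local_opt by simp
    also have "\<dots> \<le> (\<Sum>i\<in>I. part i (res i x'))"
      using local_opt res[OF x'] by (intro sum_mono) blast
    also have "\<dots> \<le> total x'"
      using split[OF x'] by simp
    finally show "total x \<le> total x'" .
  qed
qed

section \<open>Co-approval classes\<close>

lemma equiv_coapp: "equiv C ((coapp_rel C P)\<^sup>+)"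
proof (rule equivI)
  show "(coapp_rel C P)\<^sup>+ \<subseteq> C \<times> C"
    by (rule trancl_subset_Sigma) (auto simp: coapp_rel_def)
  show "refl_on C ((coapp_rel C P)\<^sup>+)"
    unfolding refl_on_def coapp_rel_def by auto
  show "sym ((coapp_rel C P)\<^sup>+)"
    by (rule sym_trancl) (auto simp: sym_def coapp_rel_def)
qed simp

lemma finite_coapp_partition: "finite C \<Longrightarrow> finite (coapp_partition C P)"
  unfolding coapp_partition_def by (intro finite_quotient equiv_type[OF equiv_coapp])

lemma coapp_class_subset: "D \<in> coapp_partition C P \<Longrightarrow> D \<subseteq> C"
  unfolding coapp_partition_def by (rule in_quotient_imp_subset[OF equiv_coapp])

lemma coapp_class_eq:
  assumes "D \<in> coapp_partition C P" "a \<in> D"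
  shows "D = (coapp_rel C P)\<^sup>+ `` {a}"
  using assms unfolding coapp_partition_def by (rule quotient_class_eq[OF equiv_coapp])

lemma ballot_subset_class:
  assumes "is_profile C P" "A \<in> set P" "a \<in> A"
  shows "A \<subseteq> (coapp_rel C P)\<^sup>+ `` {a}"
proof
  fix x assume "x \<in> A"
  then have "(a,x) \<in> coapp_rel C P"
    using assms unfolding is_profile_def coapp_rel_def by blast
  then show "x \<in> (coapp_rel C P)\<^sup>+ `` {a}" by auto
qed

lemma ballot_subset_or_disjoint_class:
  assumes "is_profile C P" "A \<in> set P" "D \<in> coapp_partition C P"
  shows "A \<subseteq> D \<or> A \<inter> D = {}"
proof (rule disjCI)
  assume "A \<inter> D \<noteq> {}"
  then obtain a where "a \<in> A" "a \<in> D" by blast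
  then show "A \<subseteq> D"
    using ballot_subset_class[OF assms(1,2) \<open>a \<in> A\<close>] coapp_class_eq[OF assms(3)] by simp
qed

lemma ballot_in_unique_class:
  assumes "is_profile C P" "A \<in> set P"
  shows "\<exists>!D. D \<in> coapp_partition C P \<and> A \<subseteq> D"
proof -
  obtain a where a: "a \<in> A" "a \<in> C"
    using assms unfolding is_profile_def by blast
  show ?thesis
  proof (rule ex1I)
    show "(coapp_rel C P)\<^sup>+ `` {a} \<in> coapp_partition C P \<and> A \<subseteq> (coapp_rel C P)\<^sup>+ `` {a}"
      unfolding coapp_partition_def using quotientI[OF a(2)] ballot_subset_class[OF assms a(1)] by blast
    show "D = (coapp_rel C P)\<^sup>+ `` {a}" if "D \<in> coapp_partition C P \<and> A \<subseteq> D" for D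
      using that a(1) by (intro coapp_class_eq) auto
  qed
qed

lemma restrict_profile_class:
  assumes "is_profile C P" "D \<in> coapp_partition C P"
  shows "restrict_profile D P = filter (\<lambda>A. A \<subseteq> D) P"
proof -
  have "\<forall>A\<in>set P. A \<noteq> {} \<and> (A \<subseteq> D \<or> A \<inter> D = {})"
    using assms ballot_subset_or_disjoint_class unfolding is_profile_def by blast
  then show ?thesis
    unfolding restrict_profile_def
  proof (induction P)
    case (Cons A P)
    then have "A \<inter> D = (if A \<subseteq> D then A else {})" "A \<noteq> {}" by auto
    then show ?case using Cons by simp
  qed simp
qed

lemma class_straddled_by_ballot:
  assumes ax: "is_axis C r" and prof: "is_profile C P" and D: "D \<in> coapp_partition C P"
    and not_interval: "\<not> is_interval r D"
  shows "\<exists>A\<in>set P. A \<subseteq> D \<and> (\<exists>x\<in>C - D. \<exists>a\<in>A. \<exists>b\<in>A. (a,x) \<in> r \<and> (x,b) \<in> r)"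
proof (rule ccontr)
  assume no_straddle: "\<not> ?thesis"
  obtain p q x where pq: "p \<in> D" "q \<in> D" and x: "(p,x) \<in> r" "(x,q) \<in> r" "x \<notin> D"
    using not_interval unfolding is_interval_def by blast
  have D_eq: "D = (coapp_rel C P)\<^sup>+ `` {p}"
    using coapp_class_eq[OF D pq(1)] .
  have xC: "x \<in> C - D"
    using x(1,3) is_axisD(4)[OF ax] by auto
  have left_stays_left: "(z,x) \<in> r"
    if yx: "(y,x) \<in> r" and yD: "y \<in> D" and yz: "(y,z) \<in> coapp_rel C P" for y z
  proof (cases "y = z")
    case False
    then obtain A where A: "A \<in> set P" "y \<in> A" "z \<in> A"
      using yz unfolding coapp_rel_def by blast
    then have AD: "A \<subseteq> D"
      using ballot_subset_or_disjoint_class[OF prof A(1) D] yD by blast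
    have "z \<in> C" "z \<noteq> x"
      using yz A(3) AD x(3) unfolding coapp_rel_def by auto
    then have "(z,x) \<in> r \<or> (x,z) \<in> r"
      using is_axisD(3)[OF ax] xC unfolding total_on_def by blast
    moreover have "(x,z) \<notin> r"
      using no_straddle A AD xC yx by blast
    ultimately show ?thesis by blast
  qed (use yx in simp)
  have "(y,x) \<in> r" if "(p,y) \<in> (coapp_rel C P)\<^sup>+" for y
    using that
  proof (induction rule: trancl_induct)
    case (base y)
    then show ?case using left_stays_left[OF x(1) pq(1)] by blast
  next
    case (step y z)
    then have "y \<in> D" using D_eq by blast
    then show ?case using left_stays_left step by blast
  qed
  moreover have "(p,q) \<in> (coapp_rel C P)\<^sup>+"
    using pq(2) D_eq by blast
  ultimately show False
    using x(2) is_axis_asym[OF ax] by metis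
qed

lemma coapp_class_unapproved:
  assumes "(u,v) \<in> (coapp_rel C P)\<^sup>+" "v \<notin> \<Union>(set P)"
  shows "u = v"
  using assms
proof (induction rule: trancl_induct)
  case (step y z)
  then show ?case unfolding coapp_rel_def by blast
qed (auto simp: coapp_rel_def)

section \<open>Flank costs\<close>

definition flank_cost :: "(nat \<Rightarrow> nat \<Rightarrow> nat) \<Rightarrow> 'a costfun" where
  "flank_cost h C A r = (\<Sum>x\<in>C - A. h (card {y\<in>A. (y,x) \<in> r}) (card {y\<in>A. (x,y) \<in> r}))"

definition outside_flank_cost ::
    "(nat \<Rightarrow> nat \<Rightarrow> nat) \<Rightarrow> 'a set \<Rightarrow> 'a set \<Rightarrow> 'a set \<Rightarrow> 'a rel \<Rightarrow> nat" where
  "outside_flank_cost h C D A r =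
     (\<Sum>x\<in>C - D. h (card {y\<in>A. (y,x) \<in> r}) (card {y\<in>A. (x,y) \<in> r}))"

definition zero_iff_one_sided :: "(nat \<Rightarrow> nat \<Rightarrow> nat) \<Rightarrow> bool" where
  "zero_iff_one_sided h \<longleftrightarrow> (\<forall>l m. h l m = 0 \<longleftrightarrow> l = 0 \<or> m = 0)"

lemma zero_iff_one_sidedD: "zero_iff_one_sided h \<Longrightarrow> h l m = 0 \<longleftrightarrow> l = 0 \<or> m = 0"
  unfolding zero_iff_one_sided_def by simp

lemma flank_cost_split:
  assumes "finite C" "D \<subseteq> C" "A \<subseteq> D"
  shows "flank_cost h C A r = flank_cost h D A (restrict_axis r D) + outside_flank_cost h C D A r"
proof -
  have "C - A = (D - A) \<union> (C - D)" "(D - A) \<inter> (C - D) = {}"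
    using assms(2,3) by blast+
  moreover have "finite (D - A)" "finite (C - D)"
    using assms(1,2) finite_subset by blast+
  moreover have "{y\<in>A. (y,x) \<in> restrict_axis r D} = {y\<in>A. (y,x) \<in> r}"
    "{y\<in>A. (x,y) \<in> restrict_axis r D} = {y\<in>A. (x,y) \<in> r}" if "x \<in> D - A" for x
    using that assms(3) unfolding restrict_axis_def by auto
  ultimately show ?thesis
    unfolding flank_cost_def outside_flank_cost_def by (simp add: sum.union_disjoint)
qed

lemma outside_flank_cost_eq_0:
  assumes "zero_iff_one_sided h" "A \<subseteq> D" "is_interval r D"
  shows "outside_flank_cost h C D A r = 0"
  unfolding outside_flank_cost_def
proof (rule sum.neutral, rule ballI)
  fix x assume x: "x \<in> C - D"
  show "h (card {y\<in>A. (y,x) \<in> r}) (card {y\<in>A. (x,y) \<in> r}) = 0"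
  proof (rule ccontr)
    assume "h (card {y\<in>A. (y,x) \<in> r}) (card {y\<in>A. (x,y) \<in> r}) \<noteq> 0"
    then have "0 < card {y\<in>A. (y,x) \<in> r}" "0 < card {y\<in>A. (x,y) \<in> r}"
      by (simp_all add: zero_iff_one_sidedD[OF assms(1)])
    then obtain a b where "a \<in> D" "b \<in> D" "(a,x) \<in> r" "(x,b) \<in> r"
      using assms(2) unfolding card_gt_0_iff by blast
    then show False
      using assms(3) x unfolding is_interval_def by blast
  qed
qed

lemma outside_flank_cost_pos:
  assumes "zero_iff_one_sided h" "finite C" "finite A" "x \<in> C - D"
    "a \<in> A" "b \<in> A" "(a,x) \<in> r" "(x,b) \<in> r"
  shows "outside_flank_cost h C D A r > 0"
proof -
  have "{y\<in>A. (y,x) \<in> r} \<noteq> {}" "{y\<in>A. (x,y) \<in> r} \<noteq> {}"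
    using assms(5-8) by blast+
  then have "card {y\<in>A. (y,x) \<in> r} \<noteq> 0" "card {y\<in>A. (x,y) \<in> r} \<noteq> 0"
    using assms(3) by simp_all
  then have "h (card {y\<in>A. (y,x) \<in> r}) (card {y\<in>A. (x,y) \<in> r}) \<noteq> 0"
    by (simp add: zero_iff_one_sidedD[OF assms(1)])
  then have "0 < h (card {y\<in>A. (y,x) \<in> r}) (card {y\<in>A. (x,y) \<in> r})"
    by simp
  also have "\<dots> \<le> outside_flank_cost h C D A r"
    unfolding outside_flank_cost_def using assms(2,4) by (intro member_le_sum) simp_all
  finally show ?thesis .
qed

definition flank_penalty :: "(nat \<Rightarrow> nat \<Rightarrow> nat) \<Rightarrow> 'a set \<Rightarrow> 'a set list \<Rightarrow> 'a rel \<Rightarrow> nat" where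
  "flank_penalty h C P r =
     (\<Sum>D\<in>coapp_partition C P. \<Sum>A\<leftarrow>filter (\<lambda>A. A \<subseteq> D) P. outside_flank_cost h C D A r)"

lemma flank_cost_profile_split:
  assumes C: "finite C" and prof: "is_profile C P"
  shows "(\<Sum>A\<leftarrow>P. flank_cost h C A r)
    = (\<Sum>D\<in>coapp_partition C P. \<Sum>A\<leftarrow>filter (\<lambda>A. A \<subseteq> D) P. flank_cost h D A (restrict_axis r D))
      + flank_penalty h C P r"
proof -
  have "(\<Sum>A\<leftarrow>P. flank_cost h C A r)
      = (\<Sum>D\<in>coapp_partition C P. \<Sum>A\<leftarrow>filter (\<lambda>A. A \<subseteq> D) P. flank_cost h C A r)"
    using finite_coapp_partition[OF C] ballot_in_unique_class[OF prof]
    by (intro sum_list_by_blocks) auto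
  also have "\<dots> = (\<Sum>D\<in>coapp_partition C P. \<Sum>A\<leftarrow>filter (\<lambda>A. A \<subseteq> D) P.
                     flank_cost h D A (restrict_axis r D) + outside_flank_cost h C D A r)"
    using flank_cost_split[OF C coapp_class_subset]
    by (intro sum.cong refl arg_cong[where f = sum_list] map_cong) auto
  finally show ?thesis
    unfolding flank_penalty_def by (simp add: sum_list_addf sum.distrib)
qed

lemma flank_penalty_eq_0_iff:
  assumes h: "zero_iff_one_sided h" and C: "finite C" and prof: "is_profile C P"
    and ax: "is_axis C r"
  shows "flank_penalty h C P r = 0 \<longleftrightarrow> (\<forall>D\<in>coapp_partition C P. is_interval r D)"
proof
  assume intervals: "\<forall>D\<in>coapp_partition C P. is_interval r D"
  show "flank_penalty h C P r = 0"
    unfolding flank_penalty_def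
  proof (rule sum.neutral, rule ballI)
    fix D assume "D \<in> coapp_partition C P"
    then show "(\<Sum>A\<leftarrow>filter (\<lambda>A. A \<subseteq> D) P. outside_flank_cost h C D A r) = 0"
      using outside_flank_cost_eq_0[OF h _ bspec[OF intervals]] by simp
  qed
next
  assume zero: "flank_penalty h C P r = 0"
  show "\<forall>D\<in>coapp_partition C P. is_interval r D"
  proof (rule ballI, rule ccontr)
    fix D assume D: "D \<in> coapp_partition C P" and "\<not> is_interval r D"
    obtain A x a b where A: "A \<in> set P" "A \<subseteq> D" and x: "x \<in> C - D"
      and ab: "a \<in> A" "b \<in> A" "(a,x) \<in> r" "(x,b) \<in> r"
      using class_straddled_by_ballot[OF ax prof D \<open>\<not> is_interval r D\<close>] by blast
    have "finite A"
      using finite_subset[OF order_trans[OF A(2) coapp_class_subset[OF D]] C] .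
    then have "outside_flank_cost h C D A r > 0"
      by (rule outside_flank_cost_pos[OF h C _ x ab])
    moreover have "outside_flank_cost h C D A r = 0"
      using zero finite_coapp_partition[OF C] D A unfolding flank_penalty_def by simp
    ultimately show False by simp
  qed
qed

lemma partition_consistent_flank_scoring:
  assumes h: "zero_iff_one_sided h"
    and f: "\<And>C P. finite C \<Longrightarrow> is_profile C P \<Longrightarrow> f C P = scoring_rule (flank_cost h) C P"
  shows "partition_consistent f"
  unfolding partition_consistent_def
proof (intro allI impI)
  fix C :: "'a set" and P r assume C: "finite C" and prof: "is_profile C P" and ax: "is_axis C r"
  define class_cost where
    "class_cost D s = (\<Sum>A\<leftarrow>filter (\<lambda>A. A \<subseteq> D) P. flank_cost h D A s)" for D s
  have local_rule: "f D (restrict_profile D P) =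
      {s. is_axis D s \<and> (\<forall>s'. is_axis D s' \<longrightarrow> class_cost D s \<le> class_cost D s')}"
    if D: "D \<in> coapp_partition C P" for D
  proof -
    have "finite D" "is_profile D (filter (\<lambda>A. A \<subseteq> D) P)"
      using coapp_class_subset[OF D] C prof finite_subset unfolding is_profile_def by auto
    then show ?thesis
      unfolding restrict_profile_class[OF prof D] class_cost_def by (simp add: f scoring_rule_def)
  qed
  have "(\<forall>r'\<in>{r. is_axis C r}. (\<Sum>A\<leftarrow>P. flank_cost h C A r) \<le> (\<Sum>A\<leftarrow>P. flank_cost h C A r'))
    \<longleftrightarrow> (\<forall>D\<in>coapp_partition C P. is_interval r D) \<and>
        (\<forall>D\<in>coapp_partition C P. \<forall>s\<in>{s. is_axis D s}. class_cost D (restrict_axis r D) \<le> class_cost D s)"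
  proof (rule separable_argmin[where res = "\<lambda>D r. restrict_axis r D"])
    show "finite (coapp_partition C P)"
      using C by (rule finite_coapp_partition)
    show "restrict_axis r' D \<in> {s. is_axis D s}"
      if "r' \<in> {r. is_axis C r}" "D \<in> coapp_partition C P" for r' D
      using that is_axis_restrict coapp_class_subset by blast
    show "(\<Sum>A\<leftarrow>P. flank_cost h C A r')
        = (\<Sum>D\<in>coapp_partition C P. class_cost D (restrict_axis r' D)) + flank_penalty h C P r'"
      for r'
      unfolding class_cost_def by (rule flank_cost_profile_split[OF C prof])
    show "flank_penalty h C P r' = 0 \<longleftrightarrow> (\<forall>D\<in>coapp_partition C P. is_interval r' D)"
      if "r' \<in> {r. is_axis C r}" for r'
      using that flank_penalty_eq_0_iff[OF h C prof] by blast
    show "\<exists>r'\<in>{r. is_axis C r}. (\<forall>D\<in>coapp_partition C P. is_interval r' D) \<and>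
        (\<forall>D\<in>coapp_partition C P. restrict_axis r' D = s D)"
      if "\<And>D. D \<in> coapp_partition C P \<Longrightarrow> s D \<in> {s. is_axis D s}" for s
      using glue_axes[OF C equiv_coapp[of C P], of s] that unfolding coapp_partition_def by auto
  qed (use ax in simp)
  then show "r \<in> f C P \<longleftrightarrow> (\<forall>D\<in>coapp_partition C P. is_interval r D \<and>
      restrict_axis r D \<in> f D (restrict_profile D P))"
    using ax is_axis_restrict[OF ax coapp_class_subset] local_rule
    unfolding f[OF C prof] scoring_rule_def by auto
qed

section \<open>BC, MS and FT\<close>

definition both_positive :: "nat \<Rightarrow> nat \<Rightarrow> nat" where
  "both_positive l m = (if 0 < l \<and> 0 < m then 1 else 0)"

lemma cost_BC_eq_flank_cost:
  assumes "finite C" "finite A"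
  shows "cost_BC C A r = flank_cost both_positive C A r"
proof -
  have "{b \<in> C - A. \<exists>a\<in>A. \<exists>c\<in>A. (a,b) \<in> r \<and> (b,c) \<in> r}
      = {x \<in> C - A. 0 < card {y\<in>A. (y,x) \<in> r} \<and> 0 < card {y\<in>A. (x,y) \<in> r}}"
    using assms(2) by (auto simp: card_gt_0_iff)
  then show ?thesis
    unfolding cost_BC_def flank_cost_def both_positive_def
    using assms(1) by (simp flip: sum.inter_filter)
qed

lemma BC_eq_flank_scoring:
  assumes "finite C" "is_profile C P"
  shows "BC C P = scoring_rule (flank_cost both_positive) C P"
proof -
  have "cost_BC C A r = flank_cost both_positive C A r" if "A \<in> set P" for A r
    using assms that finite_subset cost_BC_eq_flank_cost unfolding is_profile_def by metis
  then have "(\<Sum>A\<leftarrow>P. cost_BC C A r) = (\<Sum>A\<leftarrow>P. flank_cost both_positive C A r)" for r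
    by (metis map_cong)
  then show ?thesis
    unfolding BC_def scoring_rule_def by simp
qed

lemma partition_consistent_BC: "partition_consistent BC"
  by (rule partition_consistent_flank_scoring[OF _ BC_eq_flank_scoring])
    (simp add: zero_iff_one_sided_def both_positive_def)

lemma partition_consistent_MS: "partition_consistent MS"
proof -
  have cost_MS_eq: "cost_MS = flank_cost min"
    by (intro ext) (simp add: cost_MS_def flank_cost_def)
  show ?thesis
    unfolding MS_def cost_MS_eq
    by (intro partition_consistent_flank_scoring[of min]) (auto simp: zero_iff_one_sided_def min_def)
qed

lemma partition_consistent_FT: "partition_consistent FT"
proof -
  have cost_FT_eq: "cost_FT = flank_cost (*)"
    by (intro ext) (simp add: cost_FT_def flank_cost_def)
  show ?thesis
    unfolding FT_def cost_FT_eq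
    by (intro partition_consistent_flank_scoring[of "(*)"]) (auto simp: zero_iff_one_sided_def)
qed

section \<open>VD and MF\<close>

lemma same_side_pairs_not_intervals:
  assumes ax: "is_axis C r" and pq: "p \<in> C" "q \<in> C" "p \<noteq> q"
    and side: "(a,p) \<in> r \<and> (a,q) \<in> r \<or> (p,a) \<in> r \<and> (q,a) \<in> r"
    and ip: "is_interval r {a,p}" and iq: "is_interval r {a,q}"
  shows False
proof -
  have "a \<noteq> p" "a \<noteq> q"
    using side is_axis_asym[OF ax] by blast+
  moreover have "(p,q) \<in> r \<or> (q,p) \<in> r"
    using is_axisD(3)[OF ax] pq unfolding total_on_def by blast
  ultimately show False
    using side ip iq pq(3) unfolding is_interval_def by blast
qed

lemma three_pairs_not_intervals:
  assumes ax: "is_axis C r" and C: "a \<in> C" "b \<in> C" "c \<in> C" "d \<in> C"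
    and dist: "a \<noteq> b" "a \<noteq> c" "a \<noteq> d" "b \<noteq> c" "b \<noteq> d" "c \<noteq> d"
    and "is_interval r {a,b}" "is_interval r {a,c}"
  shows "\<not> is_interval r {a,d}"
proof
  assume "is_interval r {a,d}"
  moreover have "(a,x) \<in> r \<or> (x,a) \<in> r" if "x \<in> {b,c,d}" for x
    using is_axisD(3)[OF ax] C dist that unfolding total_on_def by blast
  ultimately show False
    using same_side_pairs_not_intervals[OF ax C(2,3) dist(4), of a]
      same_side_pairs_not_intervals[OF ax C(2,4) dist(5), of a]
      same_side_pairs_not_intervals[OF ax C(3,4) dist(6), of a] assms(12,13)
    by blast
qed

definition rank_order :: "('a \<Rightarrow> nat) \<Rightarrow> 'a set \<Rightarrow> 'a rel" where
  "rank_order rk C = {(x,y). x \<in> C \<and> y \<in> C \<and> rk x < rk y}"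

lemma is_axis_rank_order:
  assumes "inj_on rk C"
  shows "is_axis C (rank_order rk C)"
  unfolding is_axis_def strict_linear_order_on_def
proof (intro conjI)
  show "total_on C (rank_order rk C)"
  proof (rule total_onI)
    fix x y assume xy: "x \<in> C" "y \<in> C" "x \<noteq> y"
    then have "rk x \<noteq> rk y"
      using inj_onD[OF assms] by blast
    then show "(x,y) \<in> rank_order rk C \<or> (y,x) \<in> rank_order rk C"
      unfolding rank_order_def using xy(1,2) by auto
  qed
qed (auto simp: rank_order_def trans_def irrefl_on_def)

lemma is_interval_rank_order_pair:
  assumes "rk y = Suc (rk x)"
  shows "is_interval (rank_order rk C) {x,y}"
  using assms unfolding is_interval_def rank_order_def by auto

definition VD_on_pairs :: "'a costfun \<Rightarrow> bool" where
  "VD_on_pairs cost \<longleftrightarrow> (\<forall>C r x y. finite C \<longrightarrow> is_axis C r \<longrightarrow> x \<in> C \<longrightarrow> y \<in> C \<longrightarrow> x \<noteq> y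
     \<longrightarrow> cost C {x,y} r = cost_VD C {x,y} r)"

lemma VD_on_pairs_star_optimal:
  assumes pairs: "VD_on_pairs cost"
    and C: "finite C" "a \<in> C" "b \<in> C" "c \<in> C" "d \<in> C" and dist: "distinct [a,b,c,d]"
    and ax: "is_axis C r" and intervals: "is_interval r {a,b}" "is_interval r {a,c}"
  shows "r \<in> scoring_rule cost C [{a,b}, {a,c}, {a,d}]"
  unfolding scoring_rule_def
proof (intro CollectI conjI allI impI ax)
  have cost_star: "(\<Sum>A\<leftarrow>[{a,b}, {a,c}, {a,d}]. cost C A r') =
      cost_VD C {a,b} r' + cost_VD C {a,c} r' + cost_VD C {a,d} r'" if "is_axis C r'" for r'
    using pairs that C dist unfolding VD_on_pairs_def by simp
  fix r' assume r': "is_axis C r'"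
  have "(\<Sum>A\<leftarrow>[{a,b}, {a,c}, {a,d}]. cost C A r) \<le> 1"
    unfolding cost_star[OF ax] using intervals by (simp add: cost_VD_def)
  also have "1 \<le> (\<Sum>A\<leftarrow>[{a,b}, {a,c}, {a,d}]. cost C A r')"
    unfolding cost_star[OF r'] using three_pairs_not_intervals[OF r' C(2-5)] dist
    by (auto simp: cost_VD_def)
  finally show "(\<Sum>A\<leftarrow>[{a,b}, {a,c}, {a,d}]. cost C A r)
      \<le> (\<Sum>A\<leftarrow>[{a,b}, {a,c}, {a,d}]. cost C A r')" .
qed

lemma infinite_obtain_distinct5:
  assumes inf: "infinite (UNIV :: 'a set)"
  obtains a b c d e :: 'a where "distinct [a,b,c,d,e]"
proof -
  obtain a :: 'a where True by simp
  obtain b where "b \<notin> {a}" using ex_new_if_finite[OF inf, of "{a}"] by auto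
  obtain c where "c \<notin> {a,b}" using ex_new_if_finite[OF inf, of "{a,b}"] by auto
  obtain d where "d \<notin> {a,b,c}" using ex_new_if_finite[OF inf, of "{a,b,c}"] by auto
  obtain e where "e \<notin> {a,b,c,d}" using ex_new_if_finite[OF inf, of "{a,b,c,d}"] by auto
  show thesis
    by (rule that[of a b c d e]) (use \<open>b \<notin> _\<close> \<open>c \<notin> _\<close> \<open>d \<notin> _\<close> \<open>e \<notin> _\<close> in auto)
qed

lemma not_partition_consistent_if_VD_on_pairs:
  assumes inf: "infinite (UNIV :: 'a set)" and pairs: "VD_on_pairs (cost :: 'a costfun)"
  shows "\<not> partition_consistent (scoring_rule cost)"
proof
  assume pc: "partition_consistent (scoring_rule cost)"
  obtain a b c d e :: 'a where dist: "distinct [a,b,c,d,e]"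
    using infinite_obtain_distinct5[OF inf] .
  define C where "C = {a,b,c,d,e}"
  define P where "P = [{a,b}, {a,c}, {a,d}]"
  define rk where "rk x = (if x = b then 0 else if x = a then 1 else if x = c then 2
    else if x = e then 3 else 4 :: nat)" for x
  define r where "r = rank_order rk C"
  have rk: "rk b = 0" "rk a = 1" "rk c = 2" "rk e = 3" "rk d = 4"
    using dist unfolding rk_def by auto
  have C: "finite C" "a \<in> C" "b \<in> C" "c \<in> C" "d \<in> C"
    unfolding C_def by simp_all
  have ax: "is_axis C r"
    unfolding r_def using rk dist by (intro is_axis_rank_order) (auto simp: inj_on_def C_def)
  have "is_interval r {b,a}" "is_interval r {a,c}"
    unfolding r_def using rk by (simp_all add: is_interval_rank_order_pair)
  then have "r \<in> scoring_rule cost C P"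
    unfolding P_def using VD_on_pairs_star_optimal[OF pairs C _ ax] dist
    by (simp add: insert_commute)
  moreover have "is_profile C P"
    unfolding is_profile_def P_def C_def by auto
  ultimately have "is_interval r D" if "D \<in> coapp_partition C P" for D
    using pc C(1) ax that unfolding partition_consistent_def by blast
  moreover have "(coapp_rel C P)\<^sup>+ `` {a} \<in> coapp_partition C P"
    unfolding coapp_partition_def using C(2) by (rule quotientI)
  moreover have "a \<in> (coapp_rel C P)\<^sup>+ `` {a}" "d \<in> (coapp_rel C P)\<^sup>+ `` {a}"
    unfolding coapp_rel_def P_def using C by auto
  moreover have "e \<notin> (coapp_rel C P)\<^sup>+ `` {a}"
    using coapp_class_unapproved[of a e C P] dist unfolding P_def by auto
  moreover have "(a,e) \<in> r" "(e,d) \<in> r"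
    unfolding r_def rank_order_def C_def using rk by auto
  ultimately show False
    unfolding is_interval_def by blast
qed

lemma cost_MF_le:
  assumes "finite C" "A \<subseteq> C" "x \<in> A" "y \<in> A" "x = y \<or> (x,y) \<in> r"
  shows "cost_MF C A r \<le> card {z \<in> A. (z,x) \<in> r \<or> (y,z) \<in> r}
                          + card {z \<in> C - A. (x,z) \<in> r \<and> (z,y) \<in> r}"
proof -
  have "finite {(x,y). x \<in> A \<and> y \<in> A \<and> (x = y \<or> (x,y) \<in> r)}"
    using finite_subset[OF assms(2,1)] by (auto intro: finite_subset[of _ "A \<times> A"])
  then show ?thesis
    unfolding cost_MF_def using assms(3-5) by (intro Min_le) auto
qed

lemma interval_if_cost_MF_eq_0:
  assumes ax: "is_axis C r" and C: "finite C" "A \<subseteq> C" "A \<noteq> {}"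
    and zero: "cost_MF C A r = 0"
  shows "is_interval r A"
proof -
  define val where "val = (\<lambda>(x,y). card {z \<in> A. (z,x) \<in> r \<or> (y,z) \<in> r}
                                 + card {z \<in> C - A. (x,z) \<in> r \<and> (z,y) \<in> r})"
  define pairs where "pairs = {(x,y). x \<in> A \<and> y \<in> A \<and> (x = y \<or> (x,y) \<in> r)}"
  have finA: "finite A"
    using finite_subset[OF C(2,1)] .
  have "finite (val ` pairs)" "val ` pairs \<noteq> {}"
    unfolding pairs_def using finA C(3) by (auto intro: finite_subset[of _ "A \<times> A"])
  moreover have "Min (val ` pairs) = 0"
    using zero unfolding cost_MF_def val_def pairs_def .
  ultimately have "0 \<in> val ` pairs"
    using Min_in by metis
  then obtain x y where "(x,y) \<in> pairs" "val (x,y) = 0"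
    by auto
  then have xy: "x \<in> A" "y \<in> A"
    and "card {z \<in> A. (z,x) \<in> r \<or> (y,z) \<in> r} = 0"
    and "card {z \<in> C - A. (x,z) \<in> r \<and> (z,y) \<in> r} = 0"
    unfolding pairs_def val_def by auto
  then have outer: "{z \<in> A. (z,x) \<in> r \<or> (y,z) \<in> r} = {}"
    and inner: "{z \<in> C - A. (x,z) \<in> r \<and> (z,y) \<in> r} = {}"
    using finA C(1) by simp_all
  have x_le: "p = x \<or> (x,p) \<in> r" and le_y: "p = y \<or> (p,y) \<in> r" if "p \<in> A" for p
    using that outer xy C(2) is_axisD(3)[OF ax] unfolding total_on_def by blast+
  show ?thesis
    unfolding is_interval_def
  proof (intro ballI allI impI)
    fix p q c assume pq: "p \<in> A" "q \<in> A" and c: "(p,c) \<in> r \<and> (c,q) \<in> r"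
    have "(x,c) \<in> r" "(c,y) \<in> r"
      using x_le[OF pq(1)] le_y[OF pq(2)] c transD[OF is_axisD(1)[OF ax]] by blast+
    moreover have "c \<in> C"
      using c is_axisD(4)[OF ax] by blast
    ultimately show "c \<in> A"
      using inner by blast
  qed
qed

lemma cost_MF_interval_pair:
  assumes ax: "is_axis C r" and C: "finite C" "u \<in> C" "v \<in> C"
    and uv: "(u,v) \<in> r" "is_interval r {u,v}"
  shows "cost_MF C {u,v} r = 0"
proof -
  have le: "cost_MF C {u,v} r \<le> card {z \<in> {u,v}. (z,u) \<in> r \<or> (v,z) \<in> r}
      + card {z \<in> C - {u,v}. (u,z) \<in> r \<and> (z,v) \<in> r}"
    using C uv by (intro cost_MF_le) auto
  have "{z \<in> {u,v}. (z,u) \<in> r \<or> (v,z) \<in> r} = {}"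
    using uv(1) is_axis_asym[OF ax] by blast
  moreover have "{z \<in> C - {u,v}. (u,z) \<in> r \<and> (z,v) \<in> r} = {}"
    using uv(2) unfolding is_interval_def by blast
  ultimately show ?thesis
    using le by (simp only: card.empty)
qed

lemma cost_MF_pair_le_1:
  assumes ax: "is_axis C r" and C: "finite C" "x \<in> C" "y \<in> C"
  shows "cost_MF C {x,y} r \<le> 1"
proof -
  have le: "cost_MF C {x,y} r \<le> card {z \<in> {x,y}. (z,x) \<in> r \<or> (x,z) \<in> r}
      + card {z \<in> C - {x,y}. (x,z) \<in> r \<and> (z,x) \<in> r}"
    using C by (intro cost_MF_le) auto
  have "{z \<in> {x,y}. (z,x) \<in> r \<or> (x,z) \<in> r} \<subseteq> {y}"
    using is_axis_asym[OF ax] by blast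
  then have "card {z \<in> {x,y}. (z,x) \<in> r \<or> (x,z) \<in> r} \<le> 1"
    using card_mono[of "{y}"] by fastforce
  moreover have "{z \<in> C - {x,y}. (x,z) \<in> r \<and> (z,x) \<in> r} = {}"
    using is_axis_asym[OF ax] by blast
  ultimately show ?thesis
    using le by (simp only: card.empty)
qed

lemma cost_MF_pair:
  assumes ax: "is_axis C r" and C: "finite C" "x \<in> C" "y \<in> C" "x \<noteq> y"
  shows "cost_MF C {x,y} r = cost_VD C {x,y} r"
proof (cases "is_interval r {x,y}")
  case True
  have "(x,y) \<in> r \<or> (y,x) \<in> r"
    using is_axisD(3)[OF ax] C unfolding total_on_def by blast
  then have "cost_MF C {x,y} r = 0"
    using cost_MF_interval_pair[OF ax C(1,2,3)] cost_MF_interval_pair[OF ax C(1,3,2)] True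
    by (auto simp: insert_commute)
  then show ?thesis
    using True by (simp add: cost_VD_def)
next
  case False
  have "cost_MF C {x,y} r \<noteq> 0"
  proof
    assume "cost_MF C {x,y} r = 0"
    then have "is_interval r {x,y}"
      using C by (intro interval_if_cost_MF_eq_0[OF ax C(1)]) auto
    then show False
      using False by simp
  qed
  then show ?thesis
    using cost_MF_pair_le_1[OF ax C(1-3)] False by (simp add: cost_VD_def)
qed

theorem mainTheorem19:
  assumes "infinite (UNIV :: 'a set)"
  shows "partition_consistent (BC :: 'a rule) \<and> partition_consistent (MS :: 'a rule)
       \<and> partition_consistent (FT :: 'a rule)
       \<and> \<not> partition_consistent (VD :: 'a rule) \<and> \<not> partition_consistent (MF :: 'a rule)"
proof (intro conjI)
  show "partition_consistent (BC :: 'a rule)" by (rule partition_consistent_BC)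
  show "partition_consistent (MS :: 'a rule)" by (rule partition_consistent_MS)
  show "partition_consistent (FT :: 'a rule)" by (rule partition_consistent_FT)
  show "\<not> partition_consistent (VD :: 'a rule)"
    unfolding VD_def by (rule not_partition_consistent_if_VD_on_pairs[OF assms])
      (simp add: VD_on_pairs_def)
  show "\<not> partition_consistent (MF :: 'a rule)"
    unfolding MF_def by (rule not_partition_consistent_if_VD_on_pairs[OF assms])
      (simp add: VD_on_pairs_def cost_MF_pair)
qed

end
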